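(* Let $n_1,m_1\ge1$, $M\ge n_1+m_1$ and $c_1\ge0$ be integers. Let $T$ be the rooted tree consisting of a path of $M-m_1-n_1$ edges from the root down to a vertex $A$, followed below $A$ by two branches: a left path of $n_1$ edges ending at a leaf of capacity $c_1$, and a right path of $m_1$ edges ending at a leaf of capacity $c_2=c_1+n_1$. Let $T'$ be a path of $M$ edges from the root ending at a leaf of capacity $c_1$. Then $$G(T)=\genfrac{[}{]}{0pt}{}{n_1+m_1}{n_1}\,G(T').$$
   Context: $[n]=\sum_{i=0}^{n-1}q^i$, $[n]!=\prod_{i=1}^n[i]$, $\genfrac{[}{]}{0pt}{}{n}{k}=[n]!/([k]![n-k]!)$. For a rooted tree whose leaves carry non-negative integer capacities, a labelling of Lascoux--Sch\"utzenberger type is an assignment of non-negative integers to edges such that labels are weakly increasing along every path going away from the root, and the label of the edge incident to each leaf is at most that leaf's capacity. $G(T)=\sum q^{\text{(sum of labels)}}$ over all such labellings. *)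

theory Defs
  imports "HOL-Computational_Algebra.Polynomial"
begin

definition qint :: "nat \<Rightarrow> int poly" where
  "qint n = (\<Sum>i<n. monom 1 i)"

definition qfact :: "nat \<Rightarrow> int poly" where
  "qfact n = (\<Prod>i=1..n. qint i)"

definition qbinom :: "nat \<Rightarrow> nat \<Rightarrow> int poly" where
  "qbinom n k = qfact n div (qfact k * qfact (n - k))"

text \<open>Rooted trees: a vertex is either a leaf carrying a capacity, or an internal
  vertex with a list of children. Each non-root vertex is identified with the edge
  joining it to its parent.\<close>
datatype tree = Leaf nat | Node "tree list"

fun subtree_at :: "tree \<Rightarrow> nat list \<Rightarrow> tree option" where
  "subtree_at t [] = Some t"
| "subtree_at (Leaf c) (i # p) = None"
| "subtree_at (Node ts) (i # p) = (if i < length ts then subtree_at (ts ! i) p else None)"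

definition edges :: "tree \<Rightarrow> nat list set" where
  "edges t = {p. p \<noteq> [] \<and> subtree_at t p \<noteq> None}"

definition LS_labellings :: "tree \<Rightarrow> (nat list \<Rightarrow> nat) set" where
  "LS_labellings t = {f.
      (\<forall>p. p \<notin> edges t \<longrightarrow> f p = 0)
    \<and> (\<forall>p\<in>edges t. \<forall>i. p @ [i] \<in> edges t \<longrightarrow> f p \<le> f (p @ [i]))
    \<and> (\<forall>p\<in>edges t. \<forall>c. subtree_at t p = Some (Leaf c) \<longrightarrow> f p \<le> c)}"

definition G :: "tree \<Rightarrow> int poly" where
  "G t = (\<Sum>f\<in>LS_labellings t. monom 1 (\<Sum>p\<in>edges t. f p))"

fun chain :: "nat \<Rightarrow> tree \<Rightarrow> tree" where
  "chain 0 t = t"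
| "chain (Suc k) t = Node [chain k t]"

end

theory Submission
  imports Defs
begin

text \<open>
  Let \<open>G_planted t a\<close> count the labellings of \<open>t\<close> that remain valid below an extra edge
  labelled \<open>a\<close> above the root. A new root edge turns it into \<open>\<Sum>v\<ge>a. q^v * G_planted t v\<close>, and a
  vertex multiplies the contributions of its children. For a path of \<open>k\<close> edges ending at a leaf
  of capacity \<open>c\<close> this gives \<open>q^(k*a) * [k+c-a choose k]\<close>. Hence, with \<open>d = c1 - a\<close>, the two
  branches below \<open>A\<close> contribute \<open>q^((n+m)*a) * [n+d choose n] * [n+m+d choose m]\<close>, which by the
  q-trinomial identity is \<open>[n+m choose n]\<close> times the contribution \<open>q^((n+m)*a) * [n+m+d choose n+m]\<close>
  of a single path of \<open>n+m\<close> edges. Proportionality for every \<open>a\<close> survives the common stem above \<open>A\<close>.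
\<close>

section \<open>Gaussian binomial coefficients\<close>

fun qbin :: "nat \<Rightarrow> nat \<Rightarrow> int poly" where
  "qbin 0 0 = 1"
| "qbin 0 (Suc k) = 0"
| "qbin (Suc N) 0 = 1"
| "qbin (Suc N) (Suc k) = qbin N k + monom 1 (Suc k) * qbin N (Suc k)"

lemma qbin_0_right [simp]: "qbin N 0 = 1"
  by (cases N) auto

lemma qbin_eq_0: "N < k \<Longrightarrow> qbin N k = 0"
proof (induction N arbitrary: k)
  case 0 then show ?case by (cases k) auto
next
  case (Suc N) then show ?case by (cases k) auto
qed

lemma qbin_same [simp]: "qbin N N = 1"
  by (induction N) (auto simp: qbin_eq_0)

lemma qint_add: "qint k + monom 1 k * qint j = qint (k + j)"
proof -
  have "monom 1 k * qint j = (\<Sum>i<j. monom 1 (k + i))"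
    by (simp add: qint_def sum_distrib_left mult_monom)
  also have "\<dots> = (\<Sum>i\<in>{k..<k + j}. monom (1::int) i)"
    by (rule sum.reindex_bij_witness[of _ "\<lambda>i. i - k" "\<lambda>i. k + i"]) auto
  finally show ?thesis
    unfolding qint_def by (metis atLeast0LessThan le_add1 sum.atLeastLessThan_concat zero_le)
qed

lemma qfact_0 [simp]: "qfact 0 = 1"
  by (simp add: qfact_def)

lemma qfact_Suc: "qfact (Suc n) = qfact n * qint (Suc n)"
  by (simp add: qfact_def)

lemma qfact_nonzero: "qfact n \<noteq> 0"
proof -
  have "coeff (qint (Suc k)) 0 = 1" for k
    by (simp add: qint_def coeff_sum coeff_monom)
  then have "qint (Suc k) \<noteq> 0" for k
    by (metis coeff_0 zero_neq_one)
  then show ?thesis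
    by (induction n) (auto simp: qfact_Suc)
qed

lemma qbin_qfact: "k \<le> N \<Longrightarrow> qbin N k * qfact k * qfact (N - k) = qfact N"
proof (induction N arbitrary: k)
  case 0 then show ?case by simp
next
  case (Suc N)
  show ?case
  proof (cases k)
    case 0 then show ?thesis by simp
  next
    case k: (Suc j)
    show ?thesis
    proof (cases "j = N")
      case True then show ?thesis using k by simp
    next
      case False
      with k \<open>k \<le> Suc N\<close> have jN: "Suc j \<le> N" by simp
      have IH1: "qbin N j * qfact j * qfact (N - j) = qfact N"
        and IH2: "qbin N (Suc j) * qfact (Suc j) * qfact (N - Suc j) = qfact N"
        using Suc.IH jN by simp_all
      have Nj: "N - j = Suc (N - Suc j)" using jN by simp
      have "qbin (Suc N) k * qfact k * qfact (Suc N - k)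
          = qbin N j * qfact j * qfact (N - j) * qint (Suc j)
            + monom 1 (Suc j) * (qbin N (Suc j) * qfact (Suc j) * qfact (N - Suc j)) * qint (N - j)"
        unfolding k by (simp add: Nj qfact_Suc algebra_simps)
      also have "\<dots> = qfact N * (qint (Suc j) + monom 1 (Suc j) * qint (N - j))"
        using IH1 IH2 by (simp add: algebra_simps)
      also have "\<dots> = qfact (Suc N)"
        using jN by (simp add: qint_add qfact_Suc)
      finally show ?thesis .
    qed
  qed
qed

lemma qbinom_eq_qbin:
  assumes "k \<le> N"
  shows "qbinom N k = qbin N k"
proof -
  have "qfact N = qbin N k * (qfact k * qfact (N - k))"
    using qbin_qfact[OF assms] by (simp add: mult.assoc)
  then show ?thesis
    unfolding qbinom_def using qfact_nonzero by simp
qed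

text \<open>Both sides equal the q-multinomial coefficient of \<open>(n, m, d)\<close>.\<close>
lemma qbin_mult_qbin:
  "qbin (n + d) n * qbin (n + m + d) m = qbin (n + m) n * qbin (n + m + d) (n + m)"
proof -
  have "(qbin (n + d) n * qbin (n + m + d) m) * (qfact n * qfact m * qfact d)
      = qbin (n + m + d) m * qfact m * (qbin (n + d) n * qfact n * qfact d)"
    by (simp add: algebra_simps)
  also have "\<dots> = qfact (n + m + d)"
    using qbin_qfact[of n "n + d"] qbin_qfact[of m "n + m + d"] by (simp add: add_ac)
  also have "\<dots> = qbin (n + m + d) (n + m) * (qbin (n + m) n * qfact n * qfact m) * qfact d"
    using qbin_qfact[of n "n + m"] qbin_qfact[of "n + m" "n + m + d"] by simp
  also have "\<dots> = (qbin (n + m) n * qbin (n + m + d) (n + m)) * (qfact n * qfact m * qfact d)"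
    by (simp add: algebra_simps)
  finally show ?thesis
    using qfact_nonzero by simp
qed

lemma qbin_hockey_stick:
  "a \<le> c \<Longrightarrow> (\<Sum>v\<in>{a..c}. monom 1 (Suc k * v) * qbin (k + (c - v)) k)
     = monom 1 (Suc k * a) * qbin (Suc k + (c - a)) (Suc k)"
proof (induction "c - a" arbitrary: a)
  case 0 then show ?case by simp
next
  case (Suc d)
  then have ac: "a < c" and d: "c - Suc a = d" by auto
  have N: "k + (c - a) = Suc (k + (c - Suc a))" "Suc k + (c - Suc a) = k + (c - a)"
    using ac by auto
  have "(\<Sum>v\<in>{a..c}. monom 1 (Suc k * v) * qbin (k + (c - v)) k)
      = monom 1 (Suc k * a) * qbin (k + (c - a)) k
        + (\<Sum>v\<in>{Suc a..c}. monom 1 (Suc k * v) * qbin (k + (c - v)) k)"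
    using ac by (simp add: Icc_eq_insert_lb_nat)
  also have "\<dots> = monom 1 (Suc k * a) * qbin (k + (c - a)) k
        + monom 1 (Suc k * Suc a) * qbin (Suc k + (c - Suc a)) (Suc k)"
    using Suc.hyps(1)[of "Suc a"] d ac by simp
  also have "\<dots> = monom 1 (Suc k * a) * (qbin (k + (c - a)) k + monom 1 (Suc k) * qbin (k + (c - a)) (Suc k))"
    unfolding N(2) by (simp add: mult_monom algebra_simps)
  also have "\<dots> = monom 1 (Suc k * a) * qbin (Suc k + (c - a)) (Suc k)"
    by simp
  finally show ?case .
qed

section \<open>Decomposing labellings at the root\<close>

lemma Nil_notin_edges [simp]: "[] \<notin> edges t"
  by (simp add: edges_def)

lemma Cons_in_edges_Node [simp]:
  "i # p \<in> edges (Node ts) \<longleftrightarrow> i < length ts \<and> (p = [] \<or> p \<in> edges (ts ! i))"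
  by (auto simp: edges_def)

lemma edges_Leaf [simp]: "edges (Leaf c) = {}"
  by (auto simp: edges_def neq_Nil_conv)

lemma edges_Node: "edges (Node ts) = (\<Union>i<length ts. insert [i] ((#) i ` edges (ts ! i)))"
proof (rule set_eqI)
  show "p \<in> edges (Node ts) \<longleftrightarrow> p \<in> (\<Union>i<length ts. insert [i] ((#) i ` edges (ts ! i)))" for p
    by (cases p) auto
qed

lemma finite_edges [simp]: "finite (edges t)"
  by (induction t) (auto simp: edges_Node)

lemma edges_Node_single: "edges (Node [s]) = insert [0] ((#) 0 ` edges s)"
  by (simp add: edges_Node lessThan_Suc)

lemma edges_Node_Cons:
  "edges (Node (s # ts)) = edges (Node [s]) \<union> (\<lambda>p. Suc (hd p) # tl p) ` edges (Node ts)"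
proof (rule set_eqI)
  fix p
  show "p \<in> edges (Node (s # ts)) \<longleftrightarrow> p \<in> edges (Node [s]) \<union> (\<lambda>p. Suc (hd p) # tl p) ` edges (Node ts)"
  proof (cases p)
    case (Cons i p')
    have "Suc j # p' \<in> (\<lambda>p. Suc (hd p) # tl p) ` edges (Node ts) \<longleftrightarrow> j # p' \<in> edges (Node ts)" for j
    proof
      assume "Suc j # p' \<in> (\<lambda>p. Suc (hd p) # tl p) ` edges (Node ts)"
      then obtain x where "x \<in> edges (Node ts)" "Suc j # p' = Suc (hd x) # tl x"
        by blast
      then show "j # p' \<in> edges (Node ts)"
        by (cases x) auto
    qed (rule image_eqI[where x = "j # p'"], simp_all)
    then show ?thesis
      using Cons by (cases i) auto
  qed auto
qed

fun fits_capacity :: "tree \<Rightarrow> nat \<Rightarrow> bool" where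
  "fits_capacity (Leaf c) v \<longleftrightarrow> v \<le> c"
| "fits_capacity (Node ts) v \<longleftrightarrow> True"

text \<open>Labellings of \<open>t\<close> that remain valid when \<open>t\<close> is hung below a new edge with label \<open>v\<close>.\<close>
definition planted_labellings :: "tree \<Rightarrow> nat \<Rightarrow> (nat list \<Rightarrow> nat) set" where
  "planted_labellings t v =
     {f \<in> LS_labellings t. fits_capacity t v \<and> (\<forall>i. [i] \<in> edges t \<longrightarrow> v \<le> f [i])}"

definition label_sum :: "tree \<Rightarrow> (nat list \<Rightarrow> nat) \<Rightarrow> nat" where
  "label_sum t f = (\<Sum>p\<in>edges t. f p)"

definition G_planted :: "tree \<Rightarrow> nat \<Rightarrow> int poly" where
  "G_planted t v = (\<Sum>f\<in>planted_labellings t v. monom 1 (label_sum t f))"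

lemma G_eq_G_planted_0: "G t = G_planted t 0"
proof -
  have "fits_capacity t 0"
    by (cases t) auto
  then show ?thesis
    by (simp add: G_def G_planted_def planted_labellings_def label_sum_def)
qed

definition branch :: "nat \<Rightarrow> (nat list \<Rightarrow> nat) \<Rightarrow> nat list \<Rightarrow> nat" where
  "branch i f p = (if p = [] then 0 else f (i # p))"

lemma planted_labellings_Node_iff:
  "f \<in> planted_labellings (Node ts) a \<longleftrightarrow>
     (\<forall>p. p \<notin> edges (Node ts) \<longrightarrow> f p = 0) \<and>
     (\<forall>i < length ts. a \<le> f [i] \<and> branch i f \<in> planted_labellings (ts ! i) (f [i]))"
  (is "?lhs \<longleftrightarrow> ?zero \<and> ?branches")
proof
  assume ?lhs
  then have zero: ?zero
    and mono: "\<And>p j. p \<in> edges (Node ts) \<Longrightarrow> p @ [j] \<in> edges (Node ts) \<Longrightarrow> f p \<le> f (p @ [j])"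
    and leaf: "\<And>p c. p \<in> edges (Node ts) \<Longrightarrow> subtree_at (Node ts) p = Some (Leaf c) \<Longrightarrow> f p \<le> c"
    and top: "\<And>i. i < length ts \<Longrightarrow> a \<le> f [i]"
    by (auto simp: planted_labellings_def LS_labellings_def)
  have "branch i f \<in> planted_labellings (ts ! i) (f [i])" if i: "i < length ts" for i
  proof -
    have "fits_capacity (ts ! i) (f [i])"
      using leaf[of "[i]"] i by (cases "ts ! i") auto
    moreover have "f [i] \<le> branch i f [j]" if "[j] \<in> edges (ts ! i)" for j
      using mono[of "[i]" j] i that by (simp add: branch_def)
    ultimately show ?thesis
      using zero mono[of "i # _"] leaf[of "i # _"] i
      by (auto simp: planted_labellings_def LS_labellings_def branch_def)
  qed
  then show "?zero \<and> ?branches"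
    using zero top by blast
next
  assume "?zero \<and> ?branches"
  then have zero: ?zero
    and top: "\<And>i. i < length ts \<Longrightarrow> a \<le> f [i]"
    and br: "\<And>i. i < length ts \<Longrightarrow> branch i f \<in> planted_labellings (ts ! i) (f [i])"
    by auto
  have "(\<forall>j. p @ [j] \<in> edges (Node ts) \<longrightarrow> f p \<le> f (p @ [j]))
      \<and> (\<forall>c. subtree_at (Node ts) p = Some (Leaf c) \<longrightarrow> f p \<le> c)"
    if p: "p \<in> edges (Node ts)" for p
  proof -
    obtain i p' where p_eq: "p = i # p'" and i: "i < length ts"
      using p by (cases p) auto
    have "branch i f \<in> planted_labellings (ts ! i) (f [i])"
      using br[OF i] .
    then show ?thesis
      using that p_eq i
      by (cases "p' = []") (auto simp: planted_labellings_def LS_labellings_def branch_def)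
  qed
  then show ?lhs
    using zero top by (auto simp: planted_labellings_def LS_labellings_def)
qed

lemma planted_labellings_zero: "f \<in> planted_labellings t v \<Longrightarrow> p \<notin> edges t \<Longrightarrow> f p = 0"
  by (simp add: planted_labellings_def LS_labellings_def)

definition plant :: "nat \<Rightarrow> (nat list \<Rightarrow> nat) \<Rightarrow> nat list \<Rightarrow> nat" where
  "plant v g p = (case p of [] \<Rightarrow> 0 | i # p' \<Rightarrow> if i = 0 then (if p' = [] then v else g p') else 0)"

lemma plant_simps [simp]:
  "plant v g [] = 0"
  "plant v g [i] = (if i = 0 then v else 0)"
  "plant v g (Suc i # p) = 0"
  by (simp_all add: plant_def)

lemma branch_plant: "g [] = 0 \<Longrightarrow> branch 0 (plant v g) = g"
  by (auto simp: branch_def plant_def)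

lemma bij_betw_plant:
  "bij_betw (\<lambda>(v, g). plant v g)
     (SIGMA v:{a..}. planted_labellings s v) (planted_labellings (Node [s]) a)"
proof (rule bij_betw_byWitness[where f' = "\<lambda>f. (f [0], branch 0 f)"])
  have g_Nil: "g [] = 0" if "g \<in> planted_labellings s v" for g v
    using planted_labellings_zero[OF that] by simp
  show "\<forall>x\<in>SIGMA v:{a..}. planted_labellings s v. (\<lambda>f. (f [0], branch 0 f)) ((\<lambda>(v, g). plant v g) x) = x"
    by (auto simp: branch_plant g_Nil)
  show "\<forall>f\<in>planted_labellings (Node [s]) a. (\<lambda>(v, g). plant v g) (f [0], branch 0 f) = f"
  proof
    fix f assume f: "f \<in> planted_labellings (Node [s]) a"
    show "(\<lambda>(v, g). plant v g) (f [0], branch 0 f) = f"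
    proof
      fix p
      show "(\<lambda>(v, g). plant v g) (f [0], branch 0 f) p = f p"
        using planted_labellings_zero[OF f, of p]
        by (cases p) (auto simp: plant_def branch_def)
    qed
  qed
  show "(\<lambda>(v, g). plant v g) ` (SIGMA v:{a..}. planted_labellings s v) \<subseteq> planted_labellings (Node [s]) a"
  proof (rule image_subsetI)
    fix x assume "x \<in> (SIGMA v:{a..}. planted_labellings s v)"
    then obtain v g where x: "x = (v, g)" and v: "a \<le> v" and g: "g \<in> planted_labellings s v"
      by auto
    have "plant v g p = 0" if "p \<notin> edges (Node [s])" for p
      using that planted_labellings_zero[OF g] by (cases p) (auto simp: plant_def)
    then show "(\<lambda>(v, g). plant v g) x \<in> planted_labellings (Node [s]) a"
      using x v g by (simp add: planted_labellings_Node_iff branch_plant g_Nil)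
  qed
  show "(\<lambda>f. (f [0], branch 0 f)) ` planted_labellings (Node [s]) a \<subseteq> (SIGMA v:{a..}. planted_labellings s v)"
    by (auto simp: planted_labellings_Node_iff)
qed

lemma label_sum_plant: "label_sum (Node [s]) (plant v g) = v + label_sum s g"
proof -
  have "(\<Sum>p\<in>(#) 0 ` edges s. plant v g p) = (\<Sum>p\<in>edges s. g p)"
    by (subst sum.reindex) (auto intro!: sum.cong simp: plant_def)
  moreover have "[0] \<notin> (#) 0 ` edges s"
    by auto
  ultimately show ?thesis
    by (simp add: label_sum_def edges_Node_single)
qed

definition join :: "(nat list \<Rightarrow> nat) \<Rightarrow> (nat list \<Rightarrow> nat) \<Rightarrow> nat list \<Rightarrow> nat" where
  "join g h p = (case p of [] \<Rightarrow> 0 | 0 # p' \<Rightarrow> g p | Suc i # p' \<Rightarrow> h (i # p'))"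

lemma join_simps [simp]:
  "join g h [] = 0"
  "join g h (0 # p) = g (0 # p)"
  "join g h (Suc i # p) = h (i # p)"
  by (simp_all add: join_def)

lemma branch_join [simp]:
  "branch 0 (join g h) = branch 0 g"
  "branch (Suc i) (join g h) = branch i h"
  by (simp_all add: branch_def fun_eq_iff)

definition drop_first_branch :: "(nat list \<Rightarrow> nat) \<Rightarrow> nat list \<Rightarrow> nat" where
  "drop_first_branch f p = (case p of [] \<Rightarrow> 0 | i # p' \<Rightarrow> f (Suc i # p'))"

lemma bij_betw_join:
  "bij_betw (\<lambda>(g, h). join g h)
     (planted_labellings (Node [s]) a \<times> planted_labellings (Node ts) a)
     (planted_labellings (Node (s # ts)) a)"
proof (rule bij_betw_byWitness[where f' = "\<lambda>f. (join f (\<lambda>_. 0), drop_first_branch f)"])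
  let ?A = "planted_labellings (Node [s]) a" and ?B = "planted_labellings (Node ts) a"
    and ?C = "planted_labellings (Node (s # ts)) a"
  show "\<forall>x\<in>?A \<times> ?B. (\<lambda>f. (join f (\<lambda>_. 0), drop_first_branch f)) ((\<lambda>(g, h). join g h) x) = x"
  proof
    fix x assume "x \<in> ?A \<times> ?B"
    then obtain g h where x: "x = (g, h)" and g: "g \<in> ?A" and h: "h \<in> ?B"
      by auto
    have "join (join g h) (\<lambda>_. 0) p = g p" for p
      using planted_labellings_zero[OF g, of p] by (cases p) (auto simp: join_def split: nat.split)
    moreover have "drop_first_branch (join g h) p = h p" for p
      using planted_labellings_zero[OF h, of p] by (cases p) (auto simp: drop_first_branch_def)
    ultimately show "(\<lambda>f. (join f (\<lambda>_. 0), drop_first_branch f)) ((\<lambda>(g, h). join g h) x) = x"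
      by (simp add: x fun_eq_iff)
  qed
  show "\<forall>f\<in>?C. (\<lambda>(g, h). join g h) (join f (\<lambda>_. 0), drop_first_branch f) = f"
  proof
    fix f assume f: "f \<in> ?C"
    have "join (join f (\<lambda>_. 0)) (drop_first_branch f) p = f p" for p
      using planted_labellings_zero[OF f, of p]
      by (cases p) (auto simp: join_def drop_first_branch_def split: nat.split)
    then show "(\<lambda>(g, h). join g h) (join f (\<lambda>_. 0), drop_first_branch f) = f"
      by (simp add: fun_eq_iff)
  qed
  show "(\<lambda>(g, h). join g h) ` (?A \<times> ?B) \<subseteq> ?C"
  proof (rule image_subsetI)
    fix x assume "x \<in> ?A \<times> ?B"
    then obtain g h where x: "x = (g, h)" and g: "g \<in> ?A" and h: "h \<in> ?B"
      by auto
    have "join g h p = 0" if "p \<notin> edges (Node (s # ts))" for p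
      using that planted_labellings_zero[OF g, of p] planted_labellings_zero[OF h, of "(hd p - 1) # tl p"]
      by (cases p) (force simp: join_def split: nat.split)+
    then show "(\<lambda>(g, h). join g h) x \<in> ?C"
      using g h by (simp add: x planted_labellings_Node_iff All_less_Suc2)
  qed
  show "(\<lambda>f. (join f (\<lambda>_. 0), drop_first_branch f)) ` ?C \<subseteq> ?A \<times> ?B"
  proof (rule image_subsetI)
    fix f assume f: "f \<in> ?C"
    have "join f (\<lambda>_. 0) p = 0" if "p \<notin> edges (Node [s])" for p
      using that planted_labellings_zero[OF f, of p]
      by (cases p) (auto simp: join_def split: nat.split)
    moreover have "drop_first_branch f p = 0" if "p \<notin> edges (Node ts)" for p
      using that planted_labellings_zero[OF f, of "Suc (hd p) # tl p"]
      by (cases p) (auto simp: drop_first_branch_def)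
    moreover have "drop_first_branch f [i] = f [Suc i]" "branch i (drop_first_branch f) = branch (Suc i) f" for i
      by (simp_all add: drop_first_branch_def branch_def fun_eq_iff)
    ultimately show "(join f (\<lambda>_. 0), drop_first_branch f) \<in> ?A \<times> ?B"
      using f by (simp add: planted_labellings_Node_iff All_less_Suc2)
  qed
qed

lemma label_sum_join:
  "label_sum (Node (s # ts)) (join g h) = label_sum (Node [s]) g + label_sum (Node ts) h"
proof -
  let ?shift = "\<lambda>p. Suc (hd p) # tl p"
  have "edges (Node [s]) \<inter> ?shift ` edges (Node ts) = {}"
    by auto
  then have "label_sum (Node (s # ts)) (join g h)
      = (\<Sum>p\<in>edges (Node [s]). join g h p) + (\<Sum>p\<in>?shift ` edges (Node ts). join g h p)"
    unfolding label_sum_def by (subst edges_Node_Cons) (simp add: sum.union_disjoint)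
  also have "(\<Sum>p\<in>edges (Node [s]). join g h p) = label_sum (Node [s]) g"
    unfolding label_sum_def by (rule sum.cong) (auto simp: edges_Node_single)
  also have "(\<Sum>p\<in>?shift ` edges (Node ts). join g h p) = label_sum (Node ts) h"
  proof -
    have inj: "inj_on ?shift (edges (Node ts))"
      by (rule inj_onI) (metis Nil_notin_edges list.collapse list.inject nat.inject)
    show ?thesis
      unfolding label_sum_def sum.reindex[OF inj]
    proof (rule sum.cong)
      fix p assume "p \<in> edges (Node ts)"
      then show "(join g h \<circ> ?shift) p = h p"
        by (cases p) simp_all
    qed simp
  qed
  finally show ?thesis .
qed

lemma G_planted_Node_Cons:
  "G_planted (Node (s # ts)) a = G_planted (Node [s]) a * G_planted (Node ts) a"
proof -
  let ?A = "planted_labellings (Node [s]) a" and ?B = "planted_labellings (Node ts) a"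
  have "G_planted (Node (s # ts)) a
      = (\<Sum>(g, h)\<in>?A \<times> ?B. monom 1 (label_sum (Node (s # ts)) (join g h)))"
    unfolding G_planted_def using sum.reindex_bij_betw[OF bij_betw_join, symmetric]
    by (simp add: case_prod_beta)
  also have "\<dots> = (\<Sum>(g, h)\<in>?A \<times> ?B. monom 1 (label_sum (Node [s]) g) * monom 1 (label_sum (Node ts) h))"
    by (rule sum.cong) (auto simp: label_sum_join mult_monom)
  also have "\<dots> = G_planted (Node [s]) a * G_planted (Node ts) a"
    by (simp add: G_planted_def sum_product sum.cartesian_product)
  finally show ?thesis .
qed

definition capacity_bounded :: "nat \<Rightarrow> tree \<Rightarrow> bool" where
  "capacity_bounded B t \<longleftrightarrow>
     (\<forall>v. finite (planted_labellings t v)) \<and> (\<forall>v>B. planted_labellings t v = {})"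

lemma planted_labellings_Leaf: "planted_labellings (Leaf c) v = (if v \<le> c then {\<lambda>_. 0} else {})"
  by (auto simp: planted_labellings_def LS_labellings_def)

lemma G_planted_Leaf: "G_planted (Leaf c) v = (if v \<le> c then 1 else 0)"
  by (simp add: G_planted_def planted_labellings_Leaf label_sum_def)

lemma capacity_bounded_Leaf: "c \<le> B \<Longrightarrow> capacity_bounded B (Leaf c)"
  by (simp add: capacity_bounded_def planted_labellings_Leaf)

lemma Sigma_planted_labellings_bounded:
  "capacity_bounded B s \<Longrightarrow>
     (SIGMA v:{a..}. planted_labellings s v) = (SIGMA v:{a..B}. planted_labellings s v)"
  unfolding capacity_bounded_def by (auto simp flip: not_less)

lemma capacity_bounded_Node_single:
  assumes "capacity_bounded B s"
  shows "capacity_bounded B (Node [s])"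
  unfolding capacity_bounded_def
proof (intro conjI allI impI)
  fix a
  have img: "planted_labellings (Node [s]) a
      = (\<lambda>(v, g). plant v g) ` (SIGMA v:{a..B}. planted_labellings s v)"
    using bij_betw_imp_surj_on[OF bij_betw_plant[of a s]]
    by (simp add: Sigma_planted_labellings_bounded[OF assms])
  show "finite (planted_labellings (Node [s]) a)"
    using assms unfolding img capacity_bounded_def by auto
  show "planted_labellings (Node [s]) a = {}" if "B < a"
    using that unfolding img by auto
qed

lemma G_planted_Node_single:
  assumes "capacity_bounded B s"
  shows "G_planted (Node [s]) a = (\<Sum>v\<in>{a..B}. monom 1 v * G_planted s v)"
proof -
  have "G_planted (Node [s]) a
      = (\<Sum>x\<in>(SIGMA v:{a..}. planted_labellings s v). monom 1 (label_sum (Node [s]) ((\<lambda>(v, g). plant v g) x)))"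
    unfolding G_planted_def by (rule sum.reindex_bij_betw[OF bij_betw_plant, symmetric])
  also have "\<dots> = (\<Sum>(v, g)\<in>(SIGMA v:{a..B}. planted_labellings s v). monom 1 (v + label_sum s g))"
    unfolding Sigma_planted_labellings_bounded[OF assms] by (simp add: split_def label_sum_plant)
  also have "\<dots> = (\<Sum>v\<in>{a..B}. \<Sum>g\<in>planted_labellings s v. monom 1 v * monom 1 (label_sum s g))"
    using assms by (subst sum.Sigma) (auto simp: capacity_bounded_def mult_monom)
  also have "\<dots> = (\<Sum>v\<in>{a..B}. monom 1 v * G_planted s v)"
    by (simp add: G_planted_def sum_distrib_left)
  finally show ?thesis .
qed

lemma capacity_bounded_Node_Cons:
  assumes "capacity_bounded B (Node [s])" and "capacity_bounded B (Node ts)"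
  shows "capacity_bounded B (Node (s # ts))"
  unfolding capacity_bounded_def
proof (intro conjI allI impI)
  fix a
  have img: "planted_labellings (Node (s # ts)) a
      = (\<lambda>(g, h). join g h) ` (planted_labellings (Node [s]) a \<times> planted_labellings (Node ts) a)"
    by (rule bij_betw_imp_surj_on[OF bij_betw_join, symmetric])
  show "finite (planted_labellings (Node (s # ts)) a)"
    using assms unfolding img capacity_bounded_def by auto
  show "planted_labellings (Node (s # ts)) a = {}" if "B < a"
    using assms that unfolding img capacity_bounded_def by auto
qed

lemma capacity_bounded_chain: "capacity_bounded B t \<Longrightarrow> capacity_bounded B (chain k t)"
  by (induction k) (auto intro: capacity_bounded_Node_single)

section \<open>Paths\<close>

lemma chain_add: "chain (a + b) t = chain a (chain b t)"
  by (induction a) auto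

lemma capacity_bounded_chain_Leaf: "c \<le> B \<Longrightarrow> capacity_bounded B (chain k (Leaf c))"
  by (intro capacity_bounded_chain capacity_bounded_Leaf)

lemma G_planted_chain_Leaf:
  "G_planted (chain k (Leaf c)) a = (if a \<le> c then monom 1 (k * a) * qbin (k + (c - a)) k else 0)"
proof (induction k arbitrary: a)
  case 0 then show ?case by (simp add: G_planted_Leaf)
next
  case (Suc k)
  have "G_planted (chain (Suc k) (Leaf c)) a = (\<Sum>v\<in>{a..c}. monom 1 v * G_planted (chain k (Leaf c)) v)"
    using G_planted_Node_single[OF capacity_bounded_chain_Leaf[of c c k]] by simp
  also have "\<dots> = (\<Sum>v\<in>{a..c}. monom 1 (Suc k * v) * qbin (k + (c - v)) k)"
    by (rule sum.cong) (auto simp: Suc mult_monom)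
  finally show ?case
    using qbin_hockey_stick[of a c k] by auto
qed

lemma G_planted_chain_Leaf_mult:
  "G_planted (chain n (Leaf c)) a * G_planted (chain m (Leaf (c + n))) a
     = qbin (n + m) n * G_planted (chain (n + m) (Leaf c)) a"
proof (cases "a \<le> c")
  case True
  define d where "d = c - a"
  have d: "c - a = d" "c + n - a = n + d"
    using True by (auto simp: d_def)
  have "G_planted (chain n (Leaf c)) a * G_planted (chain m (Leaf (c + n))) a
      = monom 1 ((n + m) * a) * (qbin (n + d) n * qbin (n + m + d) m)"
    using True by (simp add: G_planted_chain_Leaf d mult_monom algebra_simps)
  also have "\<dots> = monom 1 ((n + m) * a) * (qbin (n + m) n * qbin (n + m + d) (n + m))"
    by (simp only: qbin_mult_qbin)
  also have "\<dots> = qbin (n + m) n * G_planted (chain (n + m) (Leaf c)) a"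
    using True by (simp add: G_planted_chain_Leaf d algebra_simps)
  finally show ?thesis .
qed (simp add: G_planted_chain_Leaf)

lemma G_planted_chain_cong:
  assumes "capacity_bounded B s" and "capacity_bounded B t"
    and "\<And>v. G_planted s v = r * G_planted t v"
  shows "G_planted (chain k s) a = r * G_planted (chain k t) a"
proof (induction k arbitrary: a)
  case 0 then show ?case using assms(3) by simp
next
  case (Suc k)
  then show ?case
    using G_planted_Node_single[OF capacity_bounded_chain[OF assms(1)], of k a]
      G_planted_Node_single[OF capacity_bounded_chain[OF assms(2)], of k a]
    by (simp add: sum_distrib_left algebra_simps)
qed

lemma
  fixes n m c :: nat
  assumes "1 \<le> n" and "1 \<le> m"
  defines "X \<equiv> Node [chain (n - 1) (Leaf c), chain (m - 1) (Leaf (c + n))]"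
  shows capacity_bounded_fork_chains: "capacity_bounded (c + n) X"
    and G_planted_fork_chains: "G_planted X a = qbin (n + m) n * G_planted (chain (n + m) (Leaf c)) a"
proof -
  have n: "chain n t = Node [chain (n - 1) t]" and m: "chain m t = Node [chain (m - 1) t]" for t
    using assms by (cases n; cases m; simp)+
  show "capacity_bounded (c + n) X"
    unfolding X_def
  proof (rule capacity_bounded_Node_Cons)
    show "capacity_bounded (c + n) (Node [chain (n - 1) (Leaf c)])"
      unfolding n[symmetric] by (rule capacity_bounded_chain_Leaf) simp
    show "capacity_bounded (c + n) (Node [chain (m - 1) (Leaf (c + n))])"
      unfolding m[symmetric] by (rule capacity_bounded_chain_Leaf) simp
  qed
  have "G_planted X a
      = G_planted (Node [chain (n - 1) (Leaf c)]) a * G_planted (Node [chain (m - 1) (Leaf (c + n))]) a"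
    unfolding X_def by (rule G_planted_Node_Cons)
  then show "G_planted X a = qbin (n + m) n * G_planted (chain (n + m) (Leaf c)) a"
    by (simp only: n[symmetric] m[symmetric] G_planted_chain_Leaf_mult)
qed

theorem mainTheorem9:
  fixes n1 m1 M c1 :: nat
  assumes "n1 \<ge> 1" and "m1 \<ge> 1" and "M \<ge> n1 + m1"
  shows "G (chain (M - m1 - n1)
             (Node [chain (n1 - 1) (Leaf c1), chain (m1 - 1) (Leaf (c1 + n1))]))
         = qbinom (n1 + m1) n1 * G (chain M (Leaf c1))"
proof -
  have M: "chain M (Leaf c1) = chain (M - m1 - n1) (chain (n1 + m1) (Leaf c1))"
    using assms(3) chain_add[of "M - m1 - n1" "n1 + m1"] by simp
  show ?thesis
    unfolding G_eq_G_planted_0 M qbinom_eq_qbin[OF le_add1]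
    by (rule G_planted_chain_cong[OF capacity_bounded_fork_chains capacity_bounded_chain_Leaf
          G_planted_fork_chains]) (use assms in simp_all)
qed

end
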